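(* Assume the standing setting described in the context (in particular Conditions (I), (II), (III)). Let $y\in\mathbb{R}$ satisfy $g(y)>0$, and let $(\widehat{Y}_1(y),\widehat{Y}_2(y))\in\mathbb{K}_1^*\times\mathbb{K}_2^*$ be an optimal solution of the minimization problem defining $g(y)$. Then $$y-\rho\, g(y)\;\le\; y+\rho\,\tilde t\big(y,\widehat{Y}_2(y)\big)\;\le\; y^*.$$
   Context: Setting: $\mathbb{V}$ is a finite Cartesian product of spaces of real symmetric matrices, with the trace inner product $\langle X,Y\rangle$ and norm $\|X\|=\sqrt{\langle X,X\rangle}$; $I$ denotes the identity element of $\mathbb{V}$ and, for $A\in\mathbb{V}$, $\lambda_{\min}(A)$ ($\lambda_{\max}(A)$) is the smallest (largest) eigenvalue over all blocks. $\mathbb{K}_1$ is the cone of positive semidefinite elements of $\mathbb{V}$ (so $\mathbb{K}_1^*=\mathbb{K}_1$), $\mathbb{K}_2\subseteq\mathbb{V}$ is a closed convex cone, and for a cone $\mathbb{J}$, $\mathbb{J}^*=\{Y:\langle X,Y\rangle\ge0\ \forall X\in\mathbb{J}\}$. Condition (II): $(\mathbb{K}_1\cap\mathbb{K}_2)^*=\mathbb{K}_1^*+\mathbb{K}_2^*$. Given $Q,H\in\mathbb{V}$, consider the primal problem $\varphi^*=\inf\{\langle Q,X\rangle: X\in\mathbb{K}_1\cap\mathbb{K}_2,\ \langle H,X\rangle=1\}$ and its dual $y^*=\sup\{y: Q-Hy=Y_1+Y_2,\ Y_1\in\mathbb{K}_1^*,\ Y_2\in\mathbb{K}_2^*\}$.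 Condition (I): the primal problem is feasible and $H\in\mathbb{K}_1^*+\mathbb{K}_2^*$. Condition (III): a number $\rho>0$ is known such that $\langle I,X\rangle\le\rho$ for every feasible $X$ of the primal problem. Define $G(y)=Q-Hy$, and $$g(y)=\min\{\|G(y)-(Y_1+Y_2)\|: Y_1\in\mathbb{K}_1^*,\ Y_2\in\mathbb{K}_2^*\}.$$ For $y\in\mathbb{R}$ and $Y_2\in\mathbb{K}_2^*$, define $\tilde t(y,Y_2)=\min\{0,\lambda_{\min}(G(y)-Y_2)\}$. *)

theory Defs
  imports "HOL-Analysis.Analysis"
begin

text \<open>The space V (a finite Cartesian product of spaces of real symmetric matrices)
is modelled as the space of real symmetric block-diagonal matrices of type
real^'n^'n, where the block structure is given by a map blk: entries (i,j)
with blk i different from blk j vanish. The trace inner product of symmetric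
matrices is the Frobenius inner product, which is the library inner product
on real^'n^'n; the norm is the induced one.\<close>

definition Vspace :: "('n::finite \<Rightarrow> 'b) \<Rightarrow> (real^'n^'n) set" where
  "Vspace blk = {X. transpose X = X \<and> (\<forall>i j. blk i \<noteq> blk j \<longrightarrow> X$i$j = 0)}"

definition psd_cone :: "('n::finite \<Rightarrow> 'b) \<Rightarrow> (real^'n^'n) set" where
  "psd_cone blk = {X \<in> Vspace blk. \<forall>x::real^'n. 0 \<le> x \<bullet> (X *v x)}"

definition dual_cone :: "('n::finite \<Rightarrow> 'b) \<Rightarrow> (real^'n^'n) set \<Rightarrow> (real^'n^'n) set" where
  "dual_cone blk J = {Y \<in> Vspace blk. \<forall>X\<in>J. 0 \<le> X \<bullet> Y}"

definition mat_eigenvalues :: "real^'n^'n \<Rightarrow> real set" where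
  "mat_eigenvalues A = {l. \<exists>v. v \<noteq> 0 \<and> A *v v = l *s v}"

text \<open>Smallest eigenvalue; for block-diagonal matrices this is the smallest
eigenvalue over all blocks.\<close>
definition lambda_min :: "real^'n^'n \<Rightarrow> real" where
  "lambda_min A = Min (mat_eigenvalues A)"

definition Gmap :: "real^'n^'n \<Rightarrow> real^'n^'n \<Rightarrow> real \<Rightarrow> real^'n^'n" where
  "Gmap Q H y = Q - y *\<^sub>R H"

definition gfun :: "('n::finite \<Rightarrow> 'b) \<Rightarrow> (real^'n^'n) set \<Rightarrow> real^'n^'n \<Rightarrow> real^'n^'n \<Rightarrow> real \<Rightarrow> real" where
  "gfun blk K2 Q H y = Inf {norm (Gmap Q H y - (Y1 + Y2)) | Y1 Y2.
      Y1 \<in> dual_cone blk (psd_cone blk) \<and> Y2 \<in> dual_cone blk K2}"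

definition ttilde :: "real^'n^'n \<Rightarrow> real^'n^'n \<Rightarrow> real \<Rightarrow> real^'n^'n \<Rightarrow> real" where
  "ttilde Q H y Y2 = min 0 (lambda_min (Gmap Q H y - Y2))"

definition primal_feasible :: "('n::finite \<Rightarrow> 'b) \<Rightarrow> (real^'n^'n) set \<Rightarrow> real^'n^'n \<Rightarrow> (real^'n^'n) set" where
  "primal_feasible blk K2 H = {X. X \<in> psd_cone blk \<inter> K2 \<and> H \<bullet> X = 1}"

definition dual_opt :: "('n::finite \<Rightarrow> 'b) \<Rightarrow> (real^'n^'n) set \<Rightarrow> real^'n^'n \<Rightarrow> real^'n^'n \<Rightarrow> real" where
  "dual_opt blk K2 Q H = Sup {y. \<exists>Y1 Y2. Gmap Q H y = Y1 + Y2 \<and>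
      Y1 \<in> dual_cone blk (psd_cone blk) \<and> Y2 \<in> dual_cone blk K2}"

end

theory Submission
  imports Defs
begin

text \<open>Write \<open>M = G(y) - Y\<^sub>2\<close> for the optimal \<open>Y\<^sub>2\<close>. Testing the optimal \<open>Y\<^sub>1 \<in> \<K>\<^sub>1\<^sup>*\<close> against the
rank-one projector onto a (block-supported) eigenvector of \<open>\<lambda>\<^sub>m\<^sub>i\<^sub>n(M)\<close> shows
\<open>-g(y) = -\<parallel>M - Y\<^sub>1\<parallel> \<le> min 0 \<lambda>\<^sub>m\<^sub>i\<^sub>n(M) = t\<close>, giving the first inequality. For the second, Condition (III)
and feasibility give \<open>\<langle>I, X\<rangle> \<le> \<rho> \<langle>H, X\<rangle>\<close> on \<open>\<K>\<^sub>1 \<inter> \<K>\<^sub>2\<close>, so by Condition (II)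
\<open>\<rho> H - I = Z\<^sub>1 + Z\<^sub>2\<close> with \<open>Z\<^sub>i \<in> \<K>\<^sub>i\<^sup>*\<close>. Then
\<open>G(y + \<rho> t) = (M - t I - t Z\<^sub>1) + (Y\<^sub>2 - t Z\<^sub>2)\<close> is a dual-feasible splitting, since \<open>M - t I \<succeq> 0\<close>.\<close>

subsection \<open>Spectral theory of symmetric real matrices\<close>

lemma symmetric_matrix_inner_commute:
  fixes A :: "real^'n^'n"
  assumes "transpose A = A"
  shows "(A *v x) \<bullet> y = x \<bullet> (A *v y)"
  by (metis assms dot_lmul_matrix vector_transpose_matrix)

lemma linear_coeff_eq_0_if_quadratic_nonneg:
  fixes a b :: real
  assumes "\<And>s. 0 \<le> a * s^2 + b * s"
  shows "b = 0"
proof -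
  define c where "c = \<bar>a\<bar> + 1"
  have c: "c > 0" "a - c < 0" unfolding c_def by auto
  have "0 \<le> a * (-b/c)^2 + b * (-b/c)" by (rule assms)
  hence "0 \<le> (a * (-b/c)^2 + b * (-b/c)) * c^2" using c by simp
  also have "\<dots> = b^2 * (a - c)" using c by (simp add: field_simps power2_eq_square)
  finally have "b^2 \<le> 0" using c by (simp add: mult_le_0_iff zero_le_mult_iff)
  thus ?thesis by simp
qed

lemma Rayleigh_quotient_attains_min:
  fixes A :: "real^'n^'n"
  assumes S: "subspace S" and ne: "S \<noteq> {0}"
  obtains v where "v \<in> S" "norm v = 1" "\<And>y. y \<in> S \<Longrightarrow> (v \<bullet> (A *v v)) * (y \<bullet> y) \<le> y \<bullet> (A *v y)"
proof -
  define f where "f x = x \<bullet> (A *v x)" for x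
  define K where "K = S \<inter> sphere 0 1"
  have normalize_in_K: "(1/norm y) *\<^sub>R y \<in> K" if "y \<in> S" "y \<noteq> 0" for y
    using that S unfolding K_def by (simp add: subspace_scale)
  have cK: "compact K" unfolding K_def by (simp add: S closed_Int_compact closed_subspace)
  obtain x where "x \<in> S" "x \<noteq> 0" using ne S subspace_0 by blast
  hence Kne: "K \<noteq> {}" using normalize_in_K by blast
  have cf: "continuous_on K f" unfolding f_def
    by (intro continuous_intros matrix_vector_mult_linear_continuous_on[unfolded o_def])
  obtain v where v: "v \<in> K" "\<And>y. y \<in> K \<Longrightarrow> f v \<le> f y"
    using continuous_attains_inf[OF cK Kne cf] by blast
  have "f v * (y \<bullet> y) \<le> f y" if "y \<in> S" for y
  proof (cases "y = 0")
    case True then show ?thesis by (simp add: f_def)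
  next
    case False
    have "f v \<le> f ((1/norm y) *\<^sub>R y)" using v(2) normalize_in_K[OF that False] by blast
    also have "\<dots> = f y / (norm y)^2" unfolding f_def
      by (simp add: matrix_vector_mult_scaleR power2_eq_square)
    finally have "f v * (norm y)^2 \<le> f y" using False by (simp add: field_simps)
    thus ?thesis by (simp add: power2_norm_eq_inner)
  qed
  moreover have "v \<in> S" "norm v = 1" using v(1) unfolding K_def by auto
  ultimately show ?thesis using that unfolding f_def by blast
qed

text \<open>Perturbing the minimizer \<open>v\<close> along \<open>w = A v - \<mu> v \<in> S\<close> gives a nonnegative quadratic in
\<open>s\<close> with linear coefficient \<open>2\<parallel>w\<parallel>\<^sup>2\<close>, so \<open>w = 0\<close>.\<close>

lemma Rayleigh_minimizer_eigenvector:
  fixes A :: "real^'n^'n"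
  assumes sym: "transpose A = A" and S: "subspace S" and inv: "\<And>x. x \<in> S \<Longrightarrow> A *v x \<in> S"
    and vS: "v \<in> S" and nv: "norm v = 1"
    and min: "\<And>y. y \<in> S \<Longrightarrow> (v \<bullet> (A *v v)) * (y \<bullet> y) \<le> y \<bullet> (A *v y)"
  shows "A *v v = (v \<bullet> (A *v v)) *\<^sub>R v"
proof -
  define f where "f x = x \<bullet> (A *v x)" for x
  define mu where "mu = f v"
  define w where "w = A *v v - mu *\<^sub>R v"
  have wS: "w \<in> S" unfolding w_def using S inv vS by (simp add: subspace_diff subspace_scale)
  have "\<forall>s. 0 \<le> (f w - mu * (w \<bullet> w)) * s^2 + (2 * (w \<bullet> w)) * s"
  proof
    fix s :: real
    have e1: "f (v + s *\<^sub>R w) = mu + 2 * s * (w \<bullet> (A *v v)) + s^2 * f w"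
      unfolding f_def mu_def using symmetric_matrix_inner_commute[OF sym, of w v]
      by (simp add: matrix_vector_right_distrib matrix_vector_mult_scaleR inner_add_left
          inner_add_right algebra_simps power2_eq_square inner_commute)
    have e2: "(v + s *\<^sub>R w) \<bullet> (v + s *\<^sub>R w) = 1 + 2 * s * (w \<bullet> v) + s^2 * (w \<bullet> w)"
      using nv by (simp add: inner_add_left inner_add_right algebra_simps power2_eq_square
          inner_commute norm_eq_1)
    have "v + s *\<^sub>R w \<in> S" using S vS wS by (simp add: subspace_add subspace_scale)
    hence "mu * ((v + s *\<^sub>R w) \<bullet> (v + s *\<^sub>R w)) \<le> f (v + s *\<^sub>R w)"
      unfolding mu_def f_def by (rule min)
    hence "0 \<le> 2 * s * (w \<bullet> (A *v v) - mu * (w \<bullet> v)) + s^2 * (f w - mu * (w \<bullet> w))"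
      unfolding e1 e2 by (simp add: algebra_simps)
    moreover have "w \<bullet> (A *v v) - mu * (w \<bullet> v) = w \<bullet> w"
      unfolding w_def[symmetric] by (simp add: w_def inner_diff_right)
    ultimately show "0 \<le> (f w - mu * (w \<bullet> w)) * s^2 + (2 * (w \<bullet> w)) * s"
      by (simp add: algebra_simps)
  qed
  hence "2 * (w \<bullet> w) = 0" using linear_coeff_eq_0_if_quadratic_nonneg by blast
  hence "w = 0" by simp
  thus ?thesis unfolding w_def mu_def f_def by simp
qed

lemma span_insert_unit_orthogonal_complement:
  fixes v :: "'a::euclidean_space"
  assumes S: "subspace S" and v: "v \<in> S" "v \<bullet> v = 1"
    and B': "span B' = S \<inter> {x. v \<bullet> x = 0}"
  shows "span (insert v B') = S"
proof
  have "B' \<subseteq> S" using B' span_superset by blast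
  thus "span (insert v B') \<subseteq> S" using S v(1) by (simp add: span_minimal)
  show "S \<subseteq> span (insert v B')"
  proof
    fix x assume x: "x \<in> S"
    have "x - (v \<bullet> x) *\<^sub>R v \<in> span B'" unfolding B' using x v S
      by (simp add: subspace_diff subspace_scale inner_diff_right)
    hence "x - (v \<bullet> x) *\<^sub>R v \<in> span (insert v B')" by (metis span_mono subset_insertI subsetD)
    moreover have "(v \<bullet> x) *\<^sub>R v \<in> span (insert v B')" by (simp add: span_base span_mul)
    ultimately have "(x - (v \<bullet> x) *\<^sub>R v) + (v \<bullet> x) *\<^sub>R v \<in> span (insert v B')" by (rule span_add)
    thus "x \<in> span (insert v B')" by simp
  qed
qed

lemma symmetric_invariant_subspace_orthonormal_eigenbasis:
  fixes A :: "real^'n^'n"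
  assumes sym: "transpose A = A"
  shows "subspace S \<Longrightarrow> (\<And>x. x \<in> S \<Longrightarrow> A *v x \<in> S) \<Longrightarrow>
    \<exists>B. B \<subseteq> S \<and> pairwise orthogonal B \<and>
      (\<forall>v\<in>B. norm v = 1 \<and> A *v v = (v \<bullet> (A *v v)) *\<^sub>R v) \<and> span B = S"
proof (induction "dim S" arbitrary: S rule: less_induct)
  case less
  show ?case
  proof (cases "S = {0}")
    case True
    then show ?thesis by (intro exI[of _ "{}"]) auto
  next
    case False
    obtain v where v0: "v \<in> S" "norm v = 1" "\<And>y. y \<in> S \<Longrightarrow> (v \<bullet> (A *v v)) * (y \<bullet> y) \<le> y \<bullet> (A *v y)"
      using Rayleigh_quotient_attains_min[OF less.prems(1) False] by blast
    have v: "v \<in> S" "norm v = 1" "A *v v = (v \<bullet> (A *v v)) *\<^sub>R v"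
      using v0 Rayleigh_minimizer_eigenvector[OF sym less.prems v0] by auto
    have vv: "v \<bullet> v = 1" using v(2) by (simp add: norm_eq_1)
    define S' where "S' = S \<inter> {x. v \<bullet> x = 0}"
    have sS': "subspace S'" unfolding S'_def by (rule subspace_inter[OF less.prems(1) subspace_hyperplane])
    have iS': "A *v x \<in> S'" if "x \<in> S'" for x
    proof -
      have "v \<bullet> (A *v x) = (A *v v) \<bullet> x" using symmetric_matrix_inner_commute[OF sym] by simp
      also have "\<dots> = 0" using that v(3) unfolding S'_def by (metis (mono_tags, lifting) inner_scaleR_left mem_Collect_eq mult_zero_right IntD2)
      finally show ?thesis using that less.prems(2) unfolding S'_def by auto
    qed
    have "v \<notin> S'" unfolding S'_def using vv by auto
    hence "S' \<subset> S" unfolding S'_def using v(1) by blast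
    hence "span S' \<subset> span S" using sS' less.prems(1) by (simp add: span_eq_iff[THEN iffD2])
    hence "dim S' < dim S" by (rule dim_psubset)
    then obtain B' where B': "B' \<subseteq> S'" "pairwise orthogonal B'"
       "\<forall>v\<in>B'. norm v = 1 \<and> A *v v = (v \<bullet> (A *v v)) *\<^sub>R v" "span B' = S'"
      using less.hyps[OF _ sS' iS'] by blast
    define B where "B = insert v B'"
    have "B \<subseteq> S" unfolding B_def using B'(1) v(1) S'_def by auto
    moreover have "pairwise orthogonal B" unfolding B_def using B'(1,2) S'_def
      by (auto simp: pairwise_insert orthogonal_def inner_commute)
    moreover have "\<forall>v\<in>B. norm v = 1 \<and> A *v v = (v \<bullet> (A *v v)) *\<^sub>R v"
      using B'(3) v unfolding B_def by auto
    moreover have "span B = S"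
      unfolding B_def using span_insert_unit_orthogonal_complement[OF less.prems(1) v(1) vv] B'(4)
      by (simp add: S'_def)
    ultimately show ?thesis by blast
  qed
qed

lemma symmetric_orthonormal_eigenbasis:
  fixes A :: "real^'n^'n"
  assumes sym: "transpose A = A"
  obtains B where "finite B" "pairwise orthogonal B" "\<And>v. v\<in>B \<Longrightarrow> norm v = 1"
    "\<And>v. v\<in>B \<Longrightarrow> A *v v = (v \<bullet> (A *v v)) *\<^sub>R v" "span B = UNIV"
proof -
  obtain B where B: "pairwise orthogonal B" "\<forall>v\<in>B. norm v = 1 \<and> A *v v = (v \<bullet> (A *v v)) *\<^sub>R v"
      "span B = UNIV"
    using symmetric_invariant_subspace_orthonormal_eigenbasis[OF sym, of UNIV] by auto
  have "0 \<notin> B" using B(2) by force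
  hence "independent B" using B(1) pairwise_orthogonal_independent by blast
  hence "finite B" using independent_bound by blast
  thus ?thesis using that B by blast
qed

context
  fixes A :: "real^'n^'n" and B :: "(real^'n) set" and lam :: "real^'n \<Rightarrow> real"
  assumes B: "finite B" "pairwise orthogonal B" "\<And>v. v\<in>B \<Longrightarrow> norm v = 1" "span B = UNIV"
    and eig: "\<And>v. v\<in>B \<Longrightarrow> A *v v = lam v *\<^sub>R v"
begin

lemma orthonormal_eigenbasis_expand: "(\<Sum>v\<in>B. (x \<bullet> v) *\<^sub>R v) = x"
  using orthonormal_basis_expand[OF B(2,3)] B(1,4) by simp

lemma mat_eigenvalues_eq_eigenbasis:
  assumes sym: "transpose A = A"
  shows "mat_eigenvalues A = lam ` B"
proof
  show "lam ` B \<subseteq> mat_eigenvalues A"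
  proof
    fix l assume "l \<in> lam ` B"
    then obtain v where v: "v \<in> B" "l = lam v" by blast
    hence "v \<noteq> 0" using B(3) by force
    thus "l \<in> mat_eigenvalues A" unfolding mat_eigenvalues_def
      by (intro CollectI exI[of _ v]) (simp add: vec_eq_iff eig v)
  qed
  show "mat_eigenvalues A \<subseteq> lam ` B"
  proof
    fix l assume "l \<in> mat_eigenvalues A"
    then obtain w where w: "w \<noteq> 0" "A *v w = l *\<^sub>R w"
      unfolding mat_eigenvalues_def by (auto simp: vec_eq_iff)
    have "\<exists>u\<in>B. w \<bullet> u \<noteq> 0"
    proof (rule ccontr)
      assume "\<not> ?thesis"
      hence "(\<Sum>u\<in>B. (w \<bullet> u) *\<^sub>R u) = 0" by simp
      thus False using orthonormal_eigenbasis_expand[of w] w(1) by simp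
    qed
    then obtain u where u: "u \<in> B" "w \<bullet> u \<noteq> 0" by blast
    have "l * (w \<bullet> u) = (A *v w) \<bullet> u" using w(2) by simp
    also have "\<dots> = w \<bullet> (A *v u)" using symmetric_matrix_inner_commute[OF sym] by simp
    also have "\<dots> = lam u * (w \<bullet> u)" using eig[OF u(1)] by simp
    finally show "l \<in> lam ` B" using u by simp
  qed
qed

lemma matrix_entry_eq_spectral_sum: "A $ i $ j = (\<Sum>v\<in>B. lam v * (v $ i * v $ j))"
proof -
  have "A *v axis j 1 = A *v (\<Sum>v\<in>B. (axis j 1 \<bullet> v) *\<^sub>R v)"
    by (simp add: orthonormal_eigenbasis_expand)
  also have "\<dots> = (\<Sum>v\<in>B. (axis j 1 \<bullet> v) *\<^sub>R (A *v v))"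
    by (simp add: linear_sum[OF matrix_vector_mul_linear] matrix_vector_mult_scaleR)
  also have "\<dots> = (\<Sum>v\<in>B. (v $ j * lam v) *\<^sub>R v)"
    using eig by (intro sum.cong) (auto simp: inner_axis')
  finally have "(A *v axis j 1) $ i = (\<Sum>v\<in>B. (v $ j * lam v) * v $ i)" by (simp add: sum_component)
  thus ?thesis by (simp add: matrix_vector_mult_basis column_def algebra_simps)
qed

lemma inner_eq_spectral_sum: "X \<bullet> A = (\<Sum>v\<in>B. lam v * (v \<bullet> (X *v v)))"
proof -
  have "X \<bullet> A = (\<Sum>i\<in>UNIV. \<Sum>j\<in>UNIV. \<Sum>v\<in>B. lam v * (v$i * (X$i$j * v$j)))"
    by (simp add: inner_vec_def matrix_entry_eq_spectral_sum sum_distrib_left mult_ac)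
  also have "\<dots> = (\<Sum>i\<in>UNIV. \<Sum>v\<in>B. \<Sum>j\<in>UNIV. lam v * (v$i * (X$i$j * v$j)))"
    by (intro sum.cong refl) (rule sum.swap)
  also have "\<dots> = (\<Sum>v\<in>B. \<Sum>i\<in>UNIV. \<Sum>j\<in>UNIV. lam v * (v$i * (X$i$j * v$j)))"
    by (rule sum.swap)
  also have "\<dots> = (\<Sum>v\<in>B. lam v * (v \<bullet> (X *v v)))"
    by (simp add: inner_vec_def matrix_vector_mult_def sum_distrib_left)
  finally show ?thesis .
qed

end

lemma lambda_min_orthonormal_eigenbasis:
  fixes M :: "real^'n^'n"
  assumes sym: "transpose M = M"
  obtains B where "finite B" "pairwise orthogonal B" "\<And>v. v\<in>B \<Longrightarrow> norm v = 1" "span B = UNIV"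
    "\<And>v. v\<in>B \<Longrightarrow> M *v v = (v \<bullet> (M *v v)) *\<^sub>R v"
    "lambda_min M \<in> (\<lambda>v. v \<bullet> (M *v v)) ` B" "\<And>v. v \<in> B \<Longrightarrow> lambda_min M \<le> v \<bullet> (M *v v)"
proof -
  obtain B where B: "finite B" "pairwise orthogonal B" "\<And>v. v\<in>B \<Longrightarrow> norm v = 1"
    "\<And>v. v\<in>B \<Longrightarrow> M *v v = (v \<bullet> (M *v v)) *\<^sub>R v" "span B = UNIV"
    using symmetric_orthonormal_eigenbasis[OF sym] by blast
  have lm: "lambda_min M = Min ((\<lambda>v. v \<bullet> (M *v v)) ` B)"
    unfolding lambda_min_def using mat_eigenvalues_eq_eigenbasis[OF B(1-3,5,4) sym] by simp
  have "B \<noteq> {}" using B(5) by (metis UNIV_not_singleton span_empty)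
  hence "lambda_min M \<in> (\<lambda>v. v \<bullet> (M *v v)) ` B" unfolding lm using B(1) by (intro Min_in) auto
  moreover have "lambda_min M \<le> v \<bullet> (M *v v)" if "v \<in> B" for v unfolding lm using B(1) that by simp
  ultimately show ?thesis using that[OF B(1-3,5,4)] by blast
qed

lemma lambda_min_eigenvector:
  fixes M :: "real^'n^'n"
  assumes "transpose M = M"
  obtains v where "v \<noteq> 0" "M *v v = lambda_min M *\<^sub>R v"
proof -
  obtain B where B: "finite B" "pairwise orthogonal B" "\<And>v. v\<in>B \<Longrightarrow> norm v = 1" "span B = UNIV"
    "\<And>v. v\<in>B \<Longrightarrow> M *v v = (v \<bullet> (M *v v)) *\<^sub>R v"
    "lambda_min M \<in> (\<lambda>v. v \<bullet> (M *v v)) ` B" "\<And>v. v \<in> B \<Longrightarrow> lambda_min M \<le> v \<bullet> (M *v v)"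
    using lambda_min_orthonormal_eigenbasis[OF assms] by blast
  then obtain u where u: "u \<in> B" "lambda_min M = u \<bullet> (M *v u)" by blast
  have "u \<noteq> 0" using B(3)[OF u(1)] by force
  thus ?thesis using that B(5)[OF u(1)] u(2) by simp
qed

lemma lambda_min_mult_trace_le_inner:
  fixes M X :: "real^'n^'n"
  assumes sym: "transpose M = M" and X: "\<And>x. 0 \<le> x \<bullet> (X *v x)"
  shows "lambda_min M * (X \<bullet> mat 1) \<le> X \<bullet> M"
proof -
  obtain B where B: "finite B" "pairwise orthogonal B" "\<And>v. v\<in>B \<Longrightarrow> norm v = 1" "span B = UNIV"
    "\<And>v. v\<in>B \<Longrightarrow> M *v v = (v \<bullet> (M *v v)) *\<^sub>R v"
    "lambda_min M \<in> (\<lambda>v. v \<bullet> (M *v v)) ` B" "\<And>v. v \<in> B \<Longrightarrow> lambda_min M \<le> v \<bullet> (M *v v)"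
    using lambda_min_orthonormal_eigenbasis[OF sym] by blast
  have "lambda_min M * (X \<bullet> mat 1) = (\<Sum>v\<in>B. lambda_min M * (v \<bullet> (X *v v)))"
    using inner_eq_spectral_sum[OF B(1-4), where A = "mat 1" and lam = "\<lambda>_. 1", of X]
    by (simp add: matrix_vector_mul_lid sum_distrib_left)
  also have "\<dots> \<le> (\<Sum>v\<in>B. (v \<bullet> (M *v v)) * (v \<bullet> (X *v v)))"
    using B(7) X by (intro sum_mono mult_right_mono) auto
  also have "\<dots> = X \<bullet> M"
    using inner_eq_spectral_sum[OF B(1-5)] by simp
  finally show ?thesis .
qed

subsection \<open>The block-diagonal space and its cones\<close>

lemma Vspace_iff:
  "X \<in> Vspace blk \<longleftrightarrow> (\<forall>i j. X$j$i = X$i$j) \<and> (\<forall>i j. blk i \<noteq> blk j \<longrightarrow> X$i$j = 0)"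
  unfolding Vspace_def by (auto simp: vec_eq_iff transpose_def)

lemma Vspace_add: "X \<in> Vspace blk \<Longrightarrow> Y \<in> Vspace blk \<Longrightarrow> X + Y \<in> Vspace blk"
  and Vspace_diff: "X \<in> Vspace blk \<Longrightarrow> Y \<in> Vspace blk \<Longrightarrow> X - Y \<in> Vspace blk"
  and Vspace_scaleR: "X \<in> Vspace blk \<Longrightarrow> c *\<^sub>R X \<in> Vspace blk"
  and Vspace_mat_1: "mat 1 \<in> Vspace blk"
  by (auto simp: Vspace_iff mat_def)

lemma transpose_Vspace: "X \<in> Vspace blk \<Longrightarrow> transpose X = X"
  by (simp add: Vspace_def)

lemma dual_cone_inner_nonneg: "Y \<in> dual_cone blk J \<Longrightarrow> X \<in> J \<Longrightarrow> 0 \<le> X \<bullet> Y"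
  by (simp add: dual_cone_def)

lemma dual_cone_add: "X \<in> dual_cone blk J \<Longrightarrow> Y \<in> dual_cone blk J \<Longrightarrow> X + Y \<in> dual_cone blk J"
  unfolding dual_cone_def by (auto simp: Vspace_add inner_add_right)

lemma dual_cone_scaleR: "X \<in> dual_cone blk J \<Longrightarrow> c \<ge> 0 \<Longrightarrow> c *\<^sub>R X \<in> dual_cone blk J"
  unfolding dual_cone_def by (auto simp: Vspace_scaleR)

lemma psd_cone_scaleR: "X \<in> psd_cone blk \<Longrightarrow> c \<ge> 0 \<Longrightarrow> c *\<^sub>R X \<in> psd_cone blk"
  unfolding psd_cone_def
  by (auto simp: Vspace_scaleR matrix_scaleR_vector_ac[symmetric] matrix_vector_mult_scaleR)

lemma psd_cone_add: "X \<in> psd_cone blk \<Longrightarrow> Y \<in> psd_cone blk \<Longrightarrow> X + Y \<in> psd_cone blk"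
  unfolding psd_cone_def by (auto simp: Vspace_add matrix_vector_mult_add_rdistrib inner_add_right)

lemma trace_nonneg_if_psd_cone:
  assumes "X \<in> psd_cone blk"
  shows "0 \<le> mat 1 \<bullet> X"
proof -
  have "mat 1 \<bullet> X = (\<Sum>i\<in>UNIV. X$i$i)"
    by (simp add: inner_vec_def mat_def of_bool_def[symmetric])
  also have "\<dots> = (\<Sum>i\<in>UNIV. axis i 1 \<bullet> (X *v axis i 1))"
    by (simp add: matrix_vector_mult_basis column_def inner_axis')
  also have "\<dots> \<ge> 0" using assms unfolding psd_cone_def by (auto intro: sum_nonneg)
  finally show ?thesis .
qed

lemma sub_lambda_min_in_dual_psd_cone:
  assumes MV: "M \<in> Vspace blk" and "t \<le> 0" "t \<le> lambda_min M"
  shows "M - t *\<^sub>R mat 1 \<in> dual_cone blk (psd_cone blk)"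
  unfolding dual_cone_def
proof (intro CollectI conjI ballI)
  show "M - t *\<^sub>R mat 1 \<in> Vspace blk" by (intro Vspace_diff Vspace_scaleR MV Vspace_mat_1)
  fix X assume X: "X \<in> psd_cone blk"
  have "t * (X \<bullet> mat 1) \<le> lambda_min M * (X \<bullet> mat 1)"
    using assms trace_nonneg_if_psd_cone[OF X] by (intro mult_right_mono) (auto simp: inner_commute)
  also have "\<dots> \<le> X \<bullet> M"
    using X transpose_Vspace[OF MV] by (intro lambda_min_mult_trace_le_inner) (auto simp: psd_cone_def)
  finally show "0 \<le> X \<bullet> (M - t *\<^sub>R mat 1)" by (simp add: inner_diff_right)
qed

subsection \<open>Rank-one test matrices\<close>

definition outer_prod :: "real^'n \<Rightarrow> real^'n^'n" where
  "outer_prod u = (\<chi> i j. u$i * u$j)"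

lemma inner_outer_prod: "outer_prod u \<bullet> A = u \<bullet> (A *v u)"
  by (simp add: outer_prod_def inner_vec_def matrix_vector_mult_def sum_distrib_left mult_ac)

lemma quadratic_form_outer_prod: "x \<bullet> (outer_prod u *v x) = (u \<bullet> x)^2"
  by (simp add: outer_prod_def inner_vec_def matrix_vector_mult_def sum_distrib_left
      sum_distrib_right power2_eq_square mult_ac)

lemma norm_outer_prod: "norm (outer_prod u) = u \<bullet> u"
proof -
  have "(norm (outer_prod u))^2 = (u \<bullet> u)^2"
    by (simp add: power2_norm_eq_inner inner_outer_prod quadratic_form_outer_prod)
  thus ?thesis by (simp add: power2_eq_iff_nonneg)
qed

text \<open>The outer product of an eigenvector need not be block-diagonal, so the eigenvector is first
restricted to a single block.\<close>

definition block_restrict :: "('n::finite \<Rightarrow> 'b) \<Rightarrow> 'b \<Rightarrow> real^'n \<Rightarrow> real^'n" where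
  "block_restrict blk b v = (\<chi> i. if blk i = b then v$i else 0)"

lemma block_restrict_eigenvector:
  assumes MV: "M \<in> Vspace blk" and ev: "M *v v = l *\<^sub>R v"
  shows "M *v block_restrict blk b v = l *\<^sub>R block_restrict blk b v"
proof -
  have off_block: "M$i$j = 0" if "blk i \<noteq> blk j" for i j using MV that by (simp add: Vspace_iff)
  have "(M *v block_restrict blk b v) $ i = (l *\<^sub>R block_restrict blk b v) $ i" for i
  proof (cases "blk i = b")
    case True
    have "(M *v block_restrict blk b v) $ i = (\<Sum>j\<in>UNIV. M$i$j * v$j)"
      unfolding matrix_vector_mult_def block_restrict_def
      by (simp, intro sum.cong refl) (use True off_block in auto)
    thus ?thesis using ev True by (simp add: block_restrict_def matrix_vector_mult_def vec_eq_iff)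
  next
    case False
    have "(M *v block_restrict blk b v) $ i = 0"
      unfolding matrix_vector_mult_def block_restrict_def
      by (simp, intro sum.neutral ballI) (use False off_block in auto)
    thus ?thesis using False by (simp add: block_restrict_def)
  qed
  thus ?thesis by (simp add: vec_eq_iff)
qed

lemma outer_prod_block_restrict_in_psd_cone: "outer_prod (block_restrict blk b v) \<in> psd_cone blk"
proof -
  have "outer_prod (block_restrict blk b v) \<in> Vspace blk"
    by (auto simp: Vspace_iff outer_prod_def block_restrict_def)
  thus ?thesis by (simp add: psd_cone_def quadratic_form_outer_prod)
qed

lemma neg_dist_dual_psd_cone_le_lambda_min:
  assumes MV: "M \<in> Vspace blk" and Y: "Y \<in> dual_cone blk (psd_cone blk)"
  shows "- norm (M - Y) \<le> min 0 (lambda_min M)"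
proof (cases "lambda_min M < 0")
  case False thus ?thesis by simp
next
  case True
  obtain v where v: "v \<noteq> 0" "M *v v = lambda_min M *\<^sub>R v"
    using lambda_min_eigenvector[OF transpose_Vspace[OF MV]] by blast
  obtain k where k: "v $ k \<noteq> 0" using v(1) by (metis vec_eq_iff zero_index)
  define u where "u = block_restrict blk (blk k) v"
  have u_eig: "M *v u = lambda_min M *\<^sub>R u"
    unfolding u_def by (rule block_restrict_eigenvector[OF MV v(2)])
  have "u $ k \<noteq> 0" using k by (simp add: u_def block_restrict_def)
  hence "u \<noteq> 0" by auto
  hence upos: "u \<bullet> u > 0" by simp
  have "0 \<le> outer_prod u \<bullet> Y"
    unfolding u_def by (rule dual_cone_inner_nonneg[OF Y outer_prod_block_restrict_in_psd_cone])
  hence "- lambda_min M * (u \<bullet> u) \<le> outer_prod u \<bullet> (Y - M)"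
    by (simp add: inner_diff_right inner_outer_prod u_eig)
  also have "\<dots> \<le> norm (outer_prod u) * norm (Y - M)" by (rule norm_cauchy_schwarz)
  also have "\<dots> = norm (M - Y) * (u \<bullet> u)" by (simp add: norm_outer_prod norm_minus_commute)
  finally have "- lambda_min M \<le> norm (M - Y)" using upos by (rule mult_right_le_imp_le)
  thus ?thesis by simp
qed

subsection \<open>Consequences of Conditions (I)--(III)\<close>

lemma gfun_eq_norm_minimizer:
  assumes "Y1h \<in> dual_cone blk (psd_cone blk)" "Y2h \<in> dual_cone blk K2"
    and "\<forall>Y1 \<in> dual_cone blk (psd_cone blk). \<forall>Y2 \<in> dual_cone blk K2.
       norm (Gmap Q H y - (Y1h + Y2h)) \<le> norm (Gmap Q H y - (Y1 + Y2))"
  shows "gfun blk K2 Q H y = norm (Gmap Q H y - (Y1h + Y2h))"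
  unfolding gfun_def by (rule cInf_eq_minimum) (use assms in auto)

lemma le_dual_opt:
  assumes "primal_feasible blk K2 H \<noteq> {}" and "Gmap Q H z = Y1 + Y2"
    and "Y1 \<in> dual_cone blk (psd_cone blk)" "Y2 \<in> dual_cone blk K2"
  shows "z \<le> dual_opt blk K2 Q H"
  unfolding dual_opt_def
proof (rule cSup_upper)
  show "z \<in> {y. \<exists>Y1 Y2. Gmap Q H y = Y1 + Y2 \<and> Y1 \<in> dual_cone blk (psd_cone blk) \<and> Y2 \<in> dual_cone blk K2}"
    using assms by blast
  obtain X0 where X0: "X0 \<in> psd_cone blk" "X0 \<in> K2" "H \<bullet> X0 = 1"
    using assms(1) unfolding primal_feasible_def by blast
  show "bdd_above {y. \<exists>Y1 Y2. Gmap Q H y = Y1 + Y2 \<and> Y1 \<in> dual_cone blk (psd_cone blk) \<and> Y2 \<in> dual_cone blk K2}"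
  proof (rule bdd_aboveI)
    fix z' assume "z' \<in> {y. \<exists>Y1 Y2. Gmap Q H y = Y1 + Y2 \<and> Y1 \<in> dual_cone blk (psd_cone blk) \<and> Y2 \<in> dual_cone blk K2}"
    then obtain Y1' Y2' where "Gmap Q H z' = Y1' + Y2'"
      "Y1' \<in> dual_cone blk (psd_cone blk)" "Y2' \<in> dual_cone blk K2" by blast
    hence "0 \<le> X0 \<bullet> Gmap Q H z'" using X0 unfolding dual_cone_def by (simp add: inner_add_right)
    thus "z' \<le> Q \<bullet> X0" using X0(3) by (simp add: Gmap_def inner_diff_right inner_commute)
  qed
qed

text \<open>A direction \<open>X\<close> with \<open>\<langle>H, X\<rangle> = 0\<close> is a recession direction of the feasible set, along which
the trace must stay bounded by \<open>\<rho>\<close>.\<close>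

lemma trace_le_0_if_recession_direction:
  assumes K2_cone: "convex_cone K2" and X0: "X0 \<in> primal_feasible blk K2 H"
    and bound: "\<forall>X \<in> primal_feasible blk K2 H. mat 1 \<bullet> X \<le> rho"
    and X: "X \<in> psd_cone blk" "X \<in> K2" "H \<bullet> X = 0"
  shows "mat 1 \<bullet> X \<le> 0"
proof (rule ccontr)
  assume "\<not> mat 1 \<bullet> X \<le> 0"
  hence pos: "mat 1 \<bullet> X > 0" by simp
  define s where "s = (\<bar>rho\<bar> + 1) / (mat 1 \<bullet> X)"
  have s: "s \<ge> 0" "s * (mat 1 \<bullet> X) = \<bar>rho\<bar> + 1" using pos by (auto simp: s_def)
  have X0p: "X0 \<in> psd_cone blk" "X0 \<in> K2" "H \<bullet> X0 = 1" using X0 unfolding primal_feasible_def by auto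
  have "X0 + s *\<^sub>R X \<in> primal_feasible blk K2 H"
    unfolding primal_feasible_def using X X0p s(1)
    by (auto intro!: psd_cone_add psd_cone_scaleR convex_cone_add[OF K2_cone]
        convex_cone_scaleR[OF K2_cone] simp: inner_add_right)
  hence "mat 1 \<bullet> (X0 + s *\<^sub>R X) \<le> rho" using bound by blast
  hence "mat 1 \<bullet> X0 + (\<bar>rho\<bar> + 1) \<le> rho" using s(2) by (simp add: inner_add_right)
  thus False using trace_nonneg_if_psd_cone[OF X0p(1)] by linarith
qed

lemma trace_le_rho_inner:
  assumes K2_cone: "convex_cone K2" and X0: "X0 \<in> primal_feasible blk K2 H"
    and H: "H = Z1 + Z2" "Z1 \<in> dual_cone blk (psd_cone blk)" "Z2 \<in> dual_cone blk K2"
    and bound: "\<forall>X \<in> primal_feasible blk K2 H. mat 1 \<bullet> X \<le> rho"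
    and X: "X \<in> psd_cone blk" "X \<in> K2"
  shows "mat 1 \<bullet> X \<le> rho * (H \<bullet> X)"
proof -
  have "0 \<le> X \<bullet> Z1" "0 \<le> X \<bullet> Z2" using H X by (auto intro: dual_cone_inner_nonneg)
  hence "0 \<le> H \<bullet> X" unfolding H(1) inner_add_left by (simp add: inner_commute)
  then consider "H \<bullet> X = 0" | "H \<bullet> X > 0" by linarith
  thus ?thesis
  proof cases
    case 1
    thus ?thesis using trace_le_0_if_recession_direction[OF K2_cone X0 bound X] by simp
  next
    case 2
    define X' where "X' = (1 / (H \<bullet> X)) *\<^sub>R X"
    have "X' \<in> primal_feasible blk K2 H"
      unfolding primal_feasible_def X'_def using X 2
      by (auto intro!: psd_cone_scaleR convex_cone_scaleR[OF K2_cone])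
    hence "mat 1 \<bullet> X' \<le> rho" using bound by blast
    thus ?thesis using 2 unfolding X'_def by (simp add: field_simps)
  qed
qed

lemma rho_H_minus_I_in_dual_cone:
  assumes K2_cone: "convex_cone K2" and HV: "H \<in> Vspace blk"
    and X0: "X0 \<in> primal_feasible blk K2 H"
    and H: "H = Z1 + Z2" "Z1 \<in> dual_cone blk (psd_cone blk)" "Z2 \<in> dual_cone blk K2"
    and bound: "\<forall>X \<in> primal_feasible blk K2 H. mat 1 \<bullet> X \<le> rho"
  shows "rho *\<^sub>R H - mat 1 \<in> dual_cone blk (psd_cone blk \<inter> K2)"
  unfolding dual_cone_def
proof (intro CollectI conjI ballI)
  show "rho *\<^sub>R H - mat 1 \<in> Vspace blk" by (intro Vspace_diff Vspace_scaleR HV Vspace_mat_1)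
  fix X assume "X \<in> psd_cone blk \<inter> K2"
  hence "mat 1 \<bullet> X \<le> rho * (H \<bullet> X)" using trace_le_rho_inner[OF K2_cone X0 H bound] by blast
  thus "0 \<le> X \<bullet> (rho *\<^sub>R H - mat 1)" by (simp add: inner_diff_right inner_commute)
qed

lemma shift_by_min_lambda_min_le_dual_opt:
  assumes feas: "primal_feasible blk K2 H \<noteq> {}" and QV: "Q \<in> Vspace blk" and HV: "H \<in> Vspace blk"
    and Y2: "Y2 \<in> dual_cone blk K2"
    and Z: "rho *\<^sub>R H - mat 1 = Z1 + Z2" "Z1 \<in> dual_cone blk (psd_cone blk)" "Z2 \<in> dual_cone blk K2"
  shows "y + rho * min 0 (lambda_min (Gmap Q H y - Y2)) \<le> dual_opt blk K2 Q H"
proof -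
  define M where "M = Gmap Q H y - Y2"
  define t where "t = min 0 (lambda_min M)"
  have MV: "M \<in> Vspace blk" using QV HV Y2
    unfolding M_def Gmap_def dual_cone_def by (auto intro!: Vspace_diff Vspace_scaleR)
  have rhoH: "rho *\<^sub>R H = Z1 + Z2 + mat 1" using Z(1) by (simp add: diff_eq_eq)
  have "Gmap Q H (y + rho * t) = Gmap Q H y - t *\<^sub>R (rho *\<^sub>R H)"
    by (simp add: Gmap_def algebra_simps)
  also have "\<dots> = (M - t *\<^sub>R mat 1 + (- t) *\<^sub>R Z1) + (Y2 + (- t) *\<^sub>R Z2)"
    unfolding rhoH M_def by (simp add: algebra_simps)
  finally have "Gmap Q H (y + rho * t) = (M - t *\<^sub>R mat 1 + (- t) *\<^sub>R Z1) + (Y2 + (- t) *\<^sub>R Z2)" .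
  moreover have "M - t *\<^sub>R mat 1 + (- t) *\<^sub>R Z1 \<in> dual_cone blk (psd_cone blk)"
    by (intro dual_cone_add sub_lambda_min_in_dual_psd_cone[OF MV] dual_cone_scaleR Z(2))
      (auto simp: t_def)
  moreover have "Y2 + (- t) *\<^sub>R Z2 \<in> dual_cone blk K2"
    by (intro dual_cone_add dual_cone_scaleR Y2 Z(3)) (auto simp: t_def)
  ultimately show ?thesis using le_dual_opt[OF feas] unfolding t_def M_def by blast
qed

theorem lemma3p3:
  fixes blk :: "'n::finite \<Rightarrow> 'b"
    and K2 :: "(real^'n^'n) set"
    and Q H Y1h Y2h :: "real^'n^'n"
    and rho y :: real
  assumes K2_sub: "K2 \<subseteq> Vspace blk"
    and K2_closed: "closed K2"
    and K2_cone: "convex_cone K2"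
    and QV: "Q \<in> Vspace blk"
    and HV: "H \<in> Vspace blk"
    and condI_feas: "primal_feasible blk K2 H \<noteq> {}"
    and condI_H: "H \<in> {Y1 + Y2 | Y1 Y2. Y1 \<in> dual_cone blk (psd_cone blk) \<and> Y2 \<in> dual_cone blk K2}"
    and condII: "dual_cone blk (psd_cone blk \<inter> K2) =
       {Y1 + Y2 | Y1 Y2. Y1 \<in> dual_cone blk (psd_cone blk) \<and> Y2 \<in> dual_cone blk K2}"
    and condIII_pos: "rho > 0"
    and condIII: "\<forall>X \<in> primal_feasible blk K2 H. mat 1 \<bullet> X \<le> rho"
    and g_pos: "gfun blk K2 Q H y > 0"
    and Y1h: "Y1h \<in> dual_cone blk (psd_cone blk)"
    and Y2h: "Y2h \<in> dual_cone blk K2"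
    and opt: "\<forall>Y1 \<in> dual_cone blk (psd_cone blk). \<forall>Y2 \<in> dual_cone blk K2.
       norm (Gmap Q H y - (Y1h + Y2h)) \<le> norm (Gmap Q H y - (Y1 + Y2))"
  shows "y - rho * gfun blk K2 Q H y \<le> y + rho * ttilde Q H y Y2h
     \<and> y + rho * ttilde Q H y Y2h \<le> dual_opt blk K2 Q H"
proof
  have MV: "Gmap Q H y - Y2h \<in> Vspace blk" using QV HV Y2h
    unfolding Gmap_def dual_cone_def by (auto intro!: Vspace_diff Vspace_scaleR)
  have "- gfun blk K2 Q H y \<le> ttilde Q H y Y2h"
    using neg_dist_dual_psd_cone_le_lambda_min[OF MV Y1h] gfun_eq_norm_minimizer[OF Y1h Y2h opt]
    unfolding ttilde_def by (simp add: algebra_simps)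
  hence "rho * (- gfun blk K2 Q H y) \<le> rho * ttilde Q H y Y2h"
    using condIII_pos by (intro mult_left_mono) auto
  thus "y - rho * gfun blk K2 Q H y \<le> y + rho * ttilde Q H y Y2h" by simp
  obtain X0 where X0: "X0 \<in> primal_feasible blk K2 H" using condI_feas by blast
  obtain W1 W2 where W: "H = W1 + W2" "W1 \<in> dual_cone blk (psd_cone blk)" "W2 \<in> dual_cone blk K2"
    using condI_H by blast
  obtain Z1 Z2 where Z: "rho *\<^sub>R H - mat 1 = Z1 + Z2"
      "Z1 \<in> dual_cone blk (psd_cone blk)" "Z2 \<in> dual_cone blk K2"
    using rho_H_minus_I_in_dual_cone[OF K2_cone HV X0 W condIII] condII by auto
  show "y + rho * ttilde Q H y Y2h \<le> dual_opt blk K2 Q H"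
    unfolding ttilde_def by (rule shift_by_min_lambda_min_le_dual_opt[OF condI_feas QV HV Y2h Z])
qed

end
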